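(* Let $U\ge 1$ users be indexed by $n\in\{1,\dots,U\}$. Fix a duty cycle $d\in(0,1)$, a maximum transmit power $P_t>0$, a noise variance $\sigma^2>0$, and for each user $n$ a harvested energy per unit time $E_n>0$, a channel gain $g_n>0$ and a time on air $T_{a,n}>0$ (the spreading factors, hence the $T_{a,n}$, are fixed). Let $\rho_{m,n}\in[0,1]$ be correlation factors with $\rho_{n,n}=1$. Suppose the packet collision time between users $n$ and $m$ is the worst-case one, $col_{n,m}=\min(T_{a,n},T_{a,m})$, independent of the energy-harvesting times. For powers $p=(p_n)$ define $$\gamma_n=\frac{p_n g_n}{\sum_{m\neq n}\frac{col_{n,m}}{T_{a,m}}\rho_{m,n}\,p_m g_m+\sigma^2},$$ and consider the problem of maximizing $\min_{n}\log(1+\gamma_n)$ over energy-harvesting times $\tau_{e,n}$ and powers $p_n$ subject to $0\le p_n\le P_t$, $0\le p_n\le \tau_{e,n}E_n/T_{a,n}$, and $0\le \tau_{e,n}\le \frac{1-d}{d}T_{a,n}$ for all $n$. Then the optimal energy-harvesting time of each user $n$ is $$\tau_{e,n}=\delta^{(2)}_{n,max}:=\min\!\left(\frac{P_t}{E_n},\frac{1-d}{d}\right)T_{a,n},$$ which is proportional to $T_{a,n}$; i.e. choosing $\tau_{e,n}=\delta^{(2)}_{n,max}$ for all $n$ (with a suitable power allocation) attains the maximum of the problem. Moreover, with this choice the available power after harvesting, $P_{h,n}=\tau_{e,n}E_n/T_{a,n}=\min\!\left(P_t,\frac{1-d}{d}E_n\right)$, is independent of $T_{a,n}$, so the choice of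 spreading factor has no effect on the energy-harvesting constraint of each user.
   Context: Model: LoRa users transmit uplink to a gateway under a "harvest-then-transmit" protocol. User $n$ first harvests energy for a time $\tau_{e,n}$, obtaining energy $\tau_{e,n}E_n$, then transmits a packet of duration (time on air) $T_{a,n}$; the available power is $P_{h,n}=\tau_{e,n}E_n/T_{a,n}$. The duty-cycle restriction limits the harvesting time to at most the off time $\frac{1-d}{d}T_{a,n}$. The transmit power $p_n$ is limited both by the maximum transmit power $P_t$ and by the available harvested power. The rate of user $n$ is $\log(1+\gamma_n)$ with $\gamma_n$ the SINR defined in the claim. *)

theory Defs
  imports Complex_Main
begin

definition col :: "(nat \<Rightarrow> real) \<Rightarrow> nat \<Rightarrow> nat \<Rightarrow> real" where
  "col Ta n m = min (Ta n) (Ta m)"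

definition sinr :: "nat \<Rightarrow> (nat \<Rightarrow> real) \<Rightarrow> (nat \<Rightarrow> nat \<Rightarrow> real) \<Rightarrow> (nat \<Rightarrow> real)
    \<Rightarrow> real \<Rightarrow> (nat \<Rightarrow> real) \<Rightarrow> nat \<Rightarrow> real" where
  "sinr U Ta rho g sigma2 p n =
     p n * g n /
     ((\<Sum>m\<in>{1..U} - {n}. col Ta n m / Ta m * rho m n * p m * g m) + sigma2)"

definition min_rate :: "nat \<Rightarrow> (nat \<Rightarrow> real) \<Rightarrow> (nat \<Rightarrow> nat \<Rightarrow> real) \<Rightarrow> (nat \<Rightarrow> real)
    \<Rightarrow> real \<Rightarrow> (nat \<Rightarrow> real) \<Rightarrow> real" where
  "min_rate U Ta rho g sigma2 p = Min ((\<lambda>n. ln (1 + sinr U Ta rho g sigma2 p n)) ` {1..U})"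

definition feasible :: "nat \<Rightarrow> real \<Rightarrow> real \<Rightarrow> (nat \<Rightarrow> real) \<Rightarrow> (nat \<Rightarrow> real)
    \<Rightarrow> (nat \<Rightarrow> real) \<Rightarrow> (nat \<Rightarrow> real) \<Rightarrow> bool" where
  "feasible U d Pt E Ta tau p \<longleftrightarrow>
     (\<forall>n\<in>{1..U}. 0 \<le> p n \<and> p n \<le> Pt \<and> p n \<le> tau n * E n / Ta n
        \<and> 0 \<le> tau n \<and> tau n \<le> (1 - d) / d * Ta n)"

definition delta2_max :: "real \<Rightarrow> real \<Rightarrow> (nat \<Rightarrow> real) \<Rightarrow> (nat \<Rightarrow> real) \<Rightarrow> nat \<Rightarrow> real" where
  "delta2_max d Pt E Ta n = min (Pt / E n) ((1 - d) / d) * Ta n"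

end

theory Submission
  imports Defs "HOL-Analysis.Analysis"
begin

text \<open>The objective depends on the powers only, and whatever the harvesting time each
  feasible power of user n lies in [0, min Pt ((1 - d)/d E n)]; harvesting for
  delta2_max makes every power in this box feasible. The continuous min-rate objective
  attains its maximum on the compact box, and that maximiser is optimal among all
  feasible pairs.\<close>

lemma continuous_on_Min_image:
  fixes f :: "'i \<Rightarrow> 'a::topological_space \<Rightarrow> real"
  assumes "finite A" "A \<noteq> {}" "\<And>i. i \<in> A \<Longrightarrow> continuous_on S (f i)"
  shows "continuous_on S (\<lambda>x. Min ((\<lambda>i. f i x) ` A))"
  using assms
proof (induction A rule: finite_ne_induct)
  case (singleton x)
  then show ?case by simp
next
  case (insert a F)
  have "continuous_on S (\<lambda>x. min (f a x) (Min ((\<lambda>i. f i x) ` F)))"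
    using insert by (intro continuous_on_min) auto
  then show ?case using insert by (simp add: Min_insert)
qed

lemma delta2_max_harvested_power:
  assumes "0 < E n" "Ta n \<noteq> 0"
  shows "delta2_max d Pt E Ta n * E n / Ta n = min Pt ((1 - d) / d * E n)"
proof -
  have "min (Pt / E n) ((1 - d) / d) * E n = min (Pt / E n * E n) ((1 - d) / d * E n)"
    using assms(1) by (simp add: min_mult_distrib_right)
  then show ?thesis
    using assms by (simp add: delta2_max_def)
qed

lemma feasible_power_le_harvest_bound:
  assumes "feasible U d Pt E Ta tau p" "n \<in> {1..U}" "0 < Ta n" "0 \<le> E n"
  shows "0 \<le> p n \<and> p n \<le> min Pt ((1 - d) / d * E n)"
proof -
  have p: "0 \<le> p n" "p n \<le> Pt" "p n \<le> tau n * E n / Ta n"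
    and tau: "tau n \<le> (1 - d) / d * Ta n"
    using assms(1,2) unfolding feasible_def by auto
  have "tau n * E n / Ta n \<le> (1 - d) / d * Ta n * E n / Ta n"
    using tau assms(3,4) by (intro divide_right_mono mult_right_mono) auto
  also have "\<dots> = (1 - d) / d * E n"
    using assms(3) by simp
  finally show ?thesis
    using p by simp
qed

lemma feasible_delta2_max_iff:
  assumes "0 < d" "d \<le> 1" "0 \<le> Pt" "\<forall>n\<in>{1..U}. 0 < E n \<and> 0 < Ta n"
  shows "feasible U d Pt E Ta (delta2_max d Pt E Ta) p \<longleftrightarrow>
         (\<forall>n\<in>{1..U}. 0 \<le> p n \<and> p n \<le> min Pt ((1 - d) / d * E n))"
proof -
  have "0 \<le> delta2_max d Pt E Ta n \<and> delta2_max d Pt E Ta n \<le> (1 - d) / d * Ta n"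
    and "delta2_max d Pt E Ta n * E n / Ta n = min Pt ((1 - d) / d * E n)"
    if "n \<in> {1..U}" for n
  proof -
    have E: "0 < E n" and Ta: "0 < Ta n"
      using assms(4) that by auto
    have "0 \<le> min (Pt / E n) ((1 - d) / d)"
      using assms(1-3) E by simp
    then show "0 \<le> delta2_max d Pt E Ta n \<and> delta2_max d Pt E Ta n \<le> (1 - d) / d * Ta n"
      unfolding delta2_max_def using Ta by (intro conjI mult_nonneg_nonneg mult_right_mono) auto
    show "delta2_max d Pt E Ta n * E n / Ta n = min Pt ((1 - d) / d * E n)"
      using E Ta by (intro delta2_max_harvested_power) auto
  qed
  then show ?thesis
    unfolding feasible_def by auto
qed

lemma min_rate_cong:
  assumes "\<And>n. n \<in> {1..U} \<Longrightarrow> p n = q n"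
  shows "min_rate U Ta rho g sigma2 p = min_rate U Ta rho g sigma2 q"
  unfolding min_rate_def sinr_def
  using assms by (intro image_cong refl arg_cong[where f = Min] arg_cong[where f = ln]
      arg_cong2[where f = "(+)"] arg_cong2[where f = "(/)"] sum.cong) auto

lemma continuous_on_min_rate:
  assumes "U \<ge> 1" "0 < sigma2"
    and "\<forall>n\<in>{1..U}. 0 \<le> g n \<and> 0 < Ta n"
    and "\<forall>m\<in>{1..U}. \<forall>n\<in>{1..U}. 0 \<le> rho m n"
  shows "continuous_on {p. \<forall>n\<in>{1..U}. 0 \<le> p n} (min_rate U Ta rho g sigma2)"
proof -
  let ?S = "{p. \<forall>n\<in>{1..U}. 0 \<le> p n}"
  have interference_nonneg:
    "0 \<le> (\<Sum>m\<in>{1..U} - {n}. col Ta n m / Ta m * rho m n * p m * g m)"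
    if "n \<in> {1..U}" "p \<in> ?S" for n p
  proof (rule sum_nonneg)
    fix m assume "m \<in> {1..U} - {n}"
    then have "0 < Ta m" "0 < Ta n" "0 \<le> g m" "0 \<le> rho m n" "0 \<le> p m"
      using assms(3,4) that by auto
    then show "0 \<le> col Ta n m / Ta m * rho m n * p m * g m"
      by (simp add: col_def)
  qed
  have continuous_coordinate: "continuous_on ?S (\<lambda>p. p m)" for m
    by (rule continuous_on_subset[OF continuous_on_product_coordinates]) auto
  have "continuous_on ?S (\<lambda>p. ln (1 + sinr U Ta rho g sigma2 p n))" if n: "n \<in> {1..U}" for n
  proof -
    have sinr_nonneg: "0 \<le> sinr U Ta rho g sigma2 p n" if "p \<in> ?S" for p
      using interference_nonneg[OF n that] assms(2,3) n that
      unfolding sinr_def by (intro divide_nonneg_pos) auto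
    have "continuous_on ?S (\<lambda>p. sinr U Ta rho g sigma2 p n)"
    proof -
      have "(\<Sum>m\<in>{1..U} - {n}. col Ta n m / Ta m * rho m n * p m * g m) + sigma2 \<noteq> 0"
        if "p \<in> ?S" for p
        using interference_nonneg[OF n that] assms(2) by linarith
      then show ?thesis
        unfolding sinr_def by (intro continuous_intros continuous_coordinate ballI)
    qed
    moreover have "1 + sinr U Ta rho g sigma2 p n \<noteq> 0" if "p \<in> ?S" for p
      using sinr_nonneg[OF that] by linarith
    ultimately show ?thesis
      by (intro continuous_intros ballI)
  qed
  then show ?thesis
    unfolding min_rate_def using assms(1) by (intro continuous_on_Min_image) auto
qed

lemma min_rate_attains_max_on_box:
  assumes "U \<ge> 1" "0 < sigma2"
    and "\<forall>n\<in>{1..U}. 0 \<le> g n \<and> 0 < Ta n"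
    and "\<forall>m\<in>{1..U}. \<forall>n\<in>{1..U}. 0 \<le> rho m n"
    and "\<forall>n\<in>{1..U}. 0 \<le> P n"
  obtains p where "\<forall>n\<in>{1..U}. 0 \<le> p n \<and> p n \<le> P n"
    and "\<And>q. \<forall>n\<in>{1..U}. 0 \<le> q n \<and> q n \<le> P n \<Longrightarrow>
           min_rate U Ta rho g sigma2 q \<le> min_rate U Ta rho g sigma2 p"
proof -
  \<comment> \<open>Coordinates outside {1..U} are pinned to 0 to make the box compact.\<close>
  define K where "K = PiE UNIV (\<lambda>n. if n \<in> {1..U} then {0..P n} else {0::real})"
  have K_iff: "q \<in> K \<longleftrightarrow> (\<forall>n\<in>{1..U}. 0 \<le> q n \<and> q n \<le> P n) \<and> (\<forall>n. n \<notin> {1..U} \<longrightarrow> q n = 0)"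
    for q
    unfolding K_def by (auto simp: PiE_iff)
  have "compactin (product_topology (\<lambda>_. euclidean) UNIV) K"
    unfolding K_def by (subst compactin_PiE) auto
  then have "compact K"
    by (simp add: euclidean_product_topology)
  moreover have "K \<noteq> {}"
    using K_iff[of "\<lambda>_. 0"] assms(5) by auto
  moreover have "continuous_on K (min_rate U Ta rho g sigma2)"
    using continuous_on_min_rate[OF assms(1-4)] by (rule continuous_on_subset) (auto simp: K_iff)
  ultimately obtain p where "p \<in> K"
    and p_max: "\<forall>q\<in>K. min_rate U Ta rho g sigma2 q \<le> min_rate U Ta rho g sigma2 p"
    using continuous_attains_sup by blast
  show ?thesis
  proof
    show "\<forall>n\<in>{1..U}. 0 \<le> p n \<and> p n \<le> P n"
      using \<open>p \<in> K\<close> K_iff by blast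
  next
    fix q assume q: "\<forall>n\<in>{1..U}. 0 \<le> q n \<and> q n \<le> P n"
    define q0 where "q0 n = (if n \<in> {1..U} then q n else 0)" for n
    have "min_rate U Ta rho g sigma2 q = min_rate U Ta rho g sigma2 q0"
      by (rule min_rate_cong) (simp add: q0_def)
    also have "\<dots> \<le> min_rate U Ta rho g sigma2 p"
      using p_max q by (auto simp: K_iff q0_def)
    finally show "min_rate U Ta rho g sigma2 q \<le> min_rate U Ta rho g sigma2 p" .
  qed
qed

theorem corollary1:
  fixes U :: nat and d Pt sigma2 :: real
    and E g Ta :: "nat \<Rightarrow> real" and rho :: "nat \<Rightarrow> nat \<Rightarrow> real"
  assumes "U \<ge> 1"
    and "0 < d" "d < 1" "0 < Pt" "0 < sigma2"
    and "\<forall>n\<in>{1..U}. 0 < E n \<and> 0 < g n \<and> 0 < Ta n"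
    and "\<forall>m\<in>{1..U}. \<forall>n\<in>{1..U}. 0 \<le> rho m n \<and> rho m n \<le> 1"
    and "\<forall>n\<in>{1..U}. rho n n = 1"
  shows "(\<exists>p. feasible U d Pt E Ta (delta2_max d Pt E Ta) p \<and>
            (\<forall>tau' p'. feasible U d Pt E Ta tau' p' \<longrightarrow>
               min_rate U Ta rho g sigma2 p' \<le> min_rate U Ta rho g sigma2 p))
       \<and> (\<forall>n\<in>{1..U}. delta2_max d Pt E Ta n * E n / Ta n = min Pt ((1 - d) / d * E n))"
proof -
  define P where "P n = min Pt ((1 - d) / d * E n)" for n
  have "\<forall>n\<in>{1..U}. 0 \<le> g n \<and> 0 < Ta n" "\<forall>m\<in>{1..U}. \<forall>n\<in>{1..U}. 0 \<le> rho m n"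
    and "\<forall>n\<in>{1..U}. 0 \<le> P n"
    using assms(2-4,6,7) by (auto simp: P_def less_imp_le)
  then obtain p where p_box: "\<forall>n\<in>{1..U}. 0 \<le> p n \<and> p n \<le> P n"
    and p_max: "\<And>q. \<forall>n\<in>{1..U}. 0 \<le> q n \<and> q n \<le> P n \<Longrightarrow>
                  min_rate U Ta rho g sigma2 q \<le> min_rate U Ta rho g sigma2 p"
    using min_rate_attains_max_on_box assms(1,5) by blast
  have "feasible U d Pt E Ta (delta2_max d Pt E Ta) p"
    using p_box assms(2-4,6) by (simp add: feasible_delta2_max_iff P_def)
  moreover have "min_rate U Ta rho g sigma2 p' \<le> min_rate U Ta rho g sigma2 p"
    if "feasible U d Pt E Ta tau' p'" for tau' p'
  proof (intro p_max ballI)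
    fix n assume n: "n \<in> {1..U}"
    then have "0 < Ta n" "0 \<le> E n"
      using assms(6) by (auto intro: less_imp_le)
    then show "0 \<le> p' n \<and> p' n \<le> P n"
      unfolding P_def by (rule feasible_power_le_harvest_bound[OF that n])
  qed
  moreover have "\<forall>n\<in>{1..U}. delta2_max d Pt E Ta n * E n / Ta n = min Pt ((1 - d) / d * E n)"
    using assms(6) by (intro ballI delta2_max_harvested_power) fastforce+
  ultimately show ?thesis
    by blast
qed

end
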